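(* Let $(a_p)\in\mathcal{T}^+$ and let $\langle\cdot,\cdot\rangle$ be the associated inner product on $\mathcal{S}^*$, $\langle b,c\rangle=\sum_{p\in\mathbb{Z}}b^p\overline{c^p}a_p$. The operator $z$ on $\mathcal{S}^*$ is continuous with respect to the inner product topology if and only if the sequence of ratios $(a_p/a_{p+1})_{p\in\mathbb{Z}}$ is bounded. In this case $\|z\|^2=\sup_p\{a_p/a_{p+1}\}$.
   Context: $\mathcal{S}$ is the space of rapidly decreasing complex $\mathbb{Z}$-indexed sequences and $\mathcal{S}^*$ its dual; $e_p\in\mathcal{S}^*$ has $1$ in place $p$ and $0$ elsewhere, and elements are written $b=(b^p)=\sum b^pe_p$. $z$ denotes the operator on $\mathcal{S}^*$ adjoint to multiplication by $z=e^{2\pi it}$ under the Fourier isomorphism $\mathcal{S}\cong C^\infty(S^1,\mathbb{C})$; explicitly $ze_p=e_{p-1}$. $\mathcal{T}^+$ is the set of strictly positive rapidly decreasing sequences $(a_p)_{p\in\mathbb{Z}}$ with $a_p=a_{-p}$. $\|z\|$ is the operator norm with respect to $\langle\cdot,\cdot\rangle$. *)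

theory Defs
  imports "HOL-Analysis.Analysis"
begin

definition rapid_decr :: "(int \<Rightarrow> 'a::real_normed_vector) \<Rightarrow> bool" where
  "rapid_decr a \<longleftrightarrow> (\<forall>N::nat. \<exists>C. \<forall>p. norm (a p) * (1 + real_of_int \<bar>p\<bar>) ^ N \<le> C)"

definition Tplus :: "(int \<Rightarrow> real) set" where
  "Tplus = {a. rapid_decr a \<and> (\<forall>p. a p > 0) \<and> (\<forall>p. a p = a (-p))}"

text \<open>The dual S*, identified (via the pairing with S) with the sequences of at most
  polynomial growth; b = (b^p) = sum b^p e_p.\<close>
definition Sdual :: "(int \<Rightarrow> complex) set" where
  "Sdual = {b. \<exists>C N::nat. \<forall>p. cmod (b p) \<le> C * (1 + real_of_int \<bar>p\<bar>) ^ N}"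

text \<open>The operator z on S*, determined by z e_p = e_{p-1}: (z b)^q = b^{q+1}.\<close>
definition zop :: "(int \<Rightarrow> complex) \<Rightarrow> (int \<Rightarrow> complex)" where
  "zop b = (\<lambda>q. b (q + 1))"

definition ip :: "(int \<Rightarrow> real) \<Rightarrow> (int \<Rightarrow> complex) \<Rightarrow> (int \<Rightarrow> complex) \<Rightarrow> complex" where
  "ip a b c = (\<Sum>\<^sub>\<infinity>p. b p * cnj (c p) * complex_of_real (a p))"

definition ipnorm :: "(int \<Rightarrow> real) \<Rightarrow> (int \<Rightarrow> complex) \<Rightarrow> real" where
  "ipnorm a b = sqrt (Re (ip a b b))"

definition z_continuous :: "(int \<Rightarrow> real) \<Rightarrow> bool" where
  "z_continuous a \<longleftrightarrow> (\<forall>b\<in>Sdual. \<forall>e>0. \<exists>d>0. \<forall>c\<in>Sdual.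
      ipnorm a (\<lambda>p. c p - b p) < d \<longrightarrow> ipnorm a (\<lambda>p. zop c p - zop b p) < e)"

definition z_opnorm :: "(int \<Rightarrow> real) \<Rightarrow> real" where
  "z_opnorm a = Sup {ipnorm a (zop b) | b. b \<in> Sdual \<and> ipnorm a b \<le> 1}"

end

(* Write |b|^2 = sum_p |b^p|^2 a_p. Then |z b|^2 = sum_p |b^(p+1)|^2 a_p, which is at most
   M |b|^2 as soon as a_p <= M a_(p+1) for all p; so a bound M on the ratios makes z
   Lipschitz with constant sqrt M. Conversely, e_(p+1) / sqrt a_(p+1) is a unit vector whose
   image has norm sqrt (a_p / a_(p+1)). Continuity at 0 bounds z on the unit ball, hence
   bounds the ratios, and the same vectors show that the operator norm is exactly
   sqrt (sup_p a_p / a_(p+1)). *)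

theory Submission
  imports Defs
begin

lemma summable_on_int_if_halves:
  fixes f :: "int \<Rightarrow> real"
  assumes "(\<lambda>n. f (int n)) summable_on UNIV" and "(\<lambda>n. f (- int n)) summable_on UNIV"
  shows "f summable_on UNIV"
proof -
  have "f summable_on range int"
    using assms(1) by (subst summable_on_reindex) (auto simp: o_def)
  moreover have "f summable_on range (\<lambda>n. - int n)"
    using assms(2) by (subst summable_on_reindex) (auto simp: o_def inj_on_def)
  ultimately have "f summable_on (range int \<union> range (\<lambda>n. - int n))"
    by (rule summable_on_union)
  moreover have "range int \<union> range (\<lambda>n. - int n) = UNIV"
  proof -
    have "p \<in> range int \<union> range (\<lambda>n. - int n)" for p :: int
      by (cases "p \<ge> 0") (auto simp: image_iff intro: exI[of _ "nat \<bar>p\<bar>"])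
    then show ?thesis by blast
  qed
  ultimately show ?thesis by simp
qed

lemma summable_on_inverse_square_int:
  "(\<lambda>p::int. 1 / (1 + real_of_int \<bar>p\<bar>)\<^sup>2) summable_on UNIV"
proof (rule summable_on_int_if_halves)
  have "summable (\<lambda>n. inverse (real n ^ 2))"
    by (rule inverse_power_summable) auto
  then have "summable (\<lambda>n. 1 / (1 + real n)\<^sup>2)"
    by (subst (asm) summable_Suc_iff[symmetric]) (simp add: field_simps)
  then have "(\<lambda>n. 1 / (1 + real n)\<^sup>2) summable_on UNIV"
    by (intro norm_summable_imp_summable_on) simp
  then show "(\<lambda>n. 1 / (1 + real_of_int \<bar>int n\<bar>)\<^sup>2) summable_on UNIV"
    and "(\<lambda>n. 1 / (1 + real_of_int \<bar>- int n\<bar>)\<^sup>2) summable_on UNIV"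
    by simp_all
qed

lemma Sdual_bound_nonneg:
  assumes "\<forall>p. cmod (b p) \<le> C * (1 + real_of_int \<bar>p\<bar>) ^ N"
  shows "C \<ge> 0"
  using assms[rule_format, of 0] by simp (meson norm_ge_zero order_trans)

lemma Sdual_diff:
  assumes "b \<in> Sdual" and "c \<in> Sdual"
  shows "(\<lambda>p. c p - b p) \<in> Sdual"
proof -
  obtain C1 N1 where C1: "\<forall>p. cmod (b p) \<le> C1 * (1 + real_of_int \<bar>p\<bar>) ^ N1"
    using assms(1) by (auto simp: Sdual_def)
  obtain C2 N2 where C2: "\<forall>p. cmod (c p) \<le> C2 * (1 + real_of_int \<bar>p\<bar>) ^ N2"
    using assms(2) by (auto simp: Sdual_def)
  have "cmod (c p - b p) \<le> (C1 + C2) * (1 + real_of_int \<bar>p\<bar>) ^ (N1 + N2)" for p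
  proof -
    define x where "x = 1 + real_of_int \<bar>p\<bar>"
    have "cmod (c p - b p) \<le> C2 * x ^ N2 + C1 * x ^ N1"
      using norm_triangle_ineq4[of "c p" "b p"] C1[rule_format, of p] C2[rule_format, of p]
      unfolding x_def by linarith
    also have "\<dots> \<le> C2 * x ^ (N1 + N2) + C1 * x ^ (N1 + N2)"
      using Sdual_bound_nonneg[OF C1] Sdual_bound_nonneg[OF C2]
      by (intro add_mono mult_left_mono power_increasing) (auto simp: x_def)
    finally show ?thesis by (simp add: x_def algebra_simps)
  qed
  then show ?thesis unfolding Sdual_def by blast
qed

lemma Sdual_scale:
  assumes "b \<in> Sdual"
  shows "(\<lambda>p. c * b p) \<in> Sdual"
proof -
  obtain C N where "\<forall>p. cmod (b p) \<le> C * (1 + real_of_int \<bar>p\<bar>) ^ N"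
    using assms by (auto simp: Sdual_def)
  then have "\<forall>p. cmod (c * b p) \<le> (cmod c * C) * (1 + real_of_int \<bar>p\<bar>) ^ N"
    by (simp add: norm_mult mult.assoc mult_left_mono)
  then show ?thesis unfolding Sdual_def by blast
qed

lemma Sdual_zop:
  assumes "b \<in> Sdual"
  shows "zop b \<in> Sdual"
proof -
  obtain C N where CN: "\<forall>p. cmod (b p) \<le> C * (1 + real_of_int \<bar>p\<bar>) ^ N"
    using assms by (auto simp: Sdual_def)
  have "cmod (zop b p) \<le> (C * 2 ^ N) * (1 + real_of_int \<bar>p\<bar>) ^ N" for p
  proof -
    have "cmod (zop b p) \<le> C * (1 + real_of_int \<bar>p + 1\<bar>) ^ N"
      using CN[rule_format, of "p + 1"] by (simp add: zop_def)
    also have "\<dots> \<le> C * (2 * (1 + real_of_int \<bar>p\<bar>)) ^ N"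
      using Sdual_bound_nonneg[OF CN] by (intro mult_left_mono power_mono) auto
    finally show ?thesis by (simp only: power_mult_distrib mult.assoc)
  qed
  then show ?thesis unfolding Sdual_def by blast
qed

lemma Sdual_zero: "(\<lambda>_. 0) \<in> Sdual"
  unfolding Sdual_def by (intro CollectI exI[of _ 0]) auto

lemma Sdual_single: "(\<lambda>q. if q = p then c else 0) \<in> Sdual"
  unfolding Sdual_def by (intro CollectI exI[of _ "cmod c"] exI[of _ 0]) auto

definition weighted_sqnorm :: "(int \<Rightarrow> real) \<Rightarrow> (int \<Rightarrow> complex) \<Rightarrow> real" where
  "weighted_sqnorm a b = (\<Sum>\<^sub>\<infinity>p. (cmod (b p))\<^sup>2 * a p)"

lemma weighted_sqnorm_summable:
  assumes a: "rapid_decr a" and b: "b \<in> Sdual"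
  shows "(\<lambda>p. (cmod (b p))\<^sup>2 * a p) summable_on UNIV"
proof -
  obtain C N where CN: "\<forall>p. cmod (b p) \<le> C * (1 + real_of_int \<bar>p\<bar>) ^ N"
    using b by (auto simp: Sdual_def)
  obtain D where D: "\<forall>p. norm (a p) * (1 + real_of_int \<bar>p\<bar>) ^ (2 * N + 2) \<le> D"
    using a unfolding rapid_decr_def by blast
  have "norm ((cmod (b p))\<^sup>2 * a p) \<le> (C\<^sup>2 * D) * (1 / (1 + real_of_int \<bar>p\<bar>)\<^sup>2)" for p
  proof -
    define x where "x = 1 + real_of_int \<bar>p\<bar>"
    have x: "x \<ge> 1" by (simp add: x_def)
    have "(cmod (b p))\<^sup>2 \<le> (C * x ^ N)\<^sup>2"
      using CN[rule_format, of p] by (intro power_mono) (auto simp: x_def)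
    then have "norm ((cmod (b p))\<^sup>2 * a p) \<le> (C * x ^ N)\<^sup>2 * norm (a p)"
      by (simp add: abs_mult mult_right_mono)
    also have "\<dots> = C\<^sup>2 * (norm (a p) * x ^ (2 * N + 2)) / x\<^sup>2"
    proof -
      have "x ^ (2 * N + 2) = (x ^ N)\<^sup>2 * x\<^sup>2"
        by (simp only: power_add power_even_eq)
      then show ?thesis using x by (simp add: power_mult_distrib)
    qed
    also have "\<dots> \<le> C\<^sup>2 * D / x\<^sup>2"
      using D[rule_format, of p] x by (intro divide_right_mono mult_left_mono) (auto simp: x_def)
    finally show ?thesis by (simp add: x_def)
  qed
  then have "(\<lambda>p. norm ((cmod (b p))\<^sup>2 * a p)) summable_on UNIV"
    by (rule Infinite_Sum.abs_summable_on_comparison_test'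
        [OF summable_on_cmult_right[OF summable_on_inverse_square_int]])
  then show ?thesis
    by (rule summable_on_iff_abs_summable_on_real[THEN iffD2])
qed

lemma ip_self:
  assumes "rapid_decr a" and "b \<in> Sdual"
  shows "ip a b b = complex_of_real (weighted_sqnorm a b)"
proof -
  have summand: "(\<lambda>p. b p * cnj (b p) * complex_of_real (a p)) =
        (\<lambda>p. complex_of_real ((cmod (b p))\<^sup>2 * a p))"
    by (auto simp: complex_mult_cnj cmod_power2 simp del: of_real_power)
  have "((\<lambda>p. (cmod (b p))\<^sup>2 * a p) has_sum weighted_sqnorm a b) UNIV"
    unfolding weighted_sqnorm_def using weighted_sqnorm_summable[OF assms] by (rule has_sum_infsum)
  then have "((\<lambda>p. complex_of_real ((cmod (b p))\<^sup>2 * a p)) has_sum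
      complex_of_real (weighted_sqnorm a b)) UNIV"
    by (rule has_sum_of_real)
  then show ?thesis
    unfolding ip_def summand by (rule infsumI)
qed

lemma ipnorm_eq_sqrt_weighted_sqnorm:
  assumes "rapid_decr a" and "b \<in> Sdual"
  shows "ipnorm a b = sqrt (weighted_sqnorm a b)"
  using ip_self[OF assms] by (simp add: ipnorm_def)

lemma ipnorm_scale: "ipnorm a (\<lambda>p. c * b p) = cmod c * ipnorm a b"
proof -
  have "ip a (\<lambda>p. c * b p) (\<lambda>p. c * b p) =
        (\<Sum>\<^sub>\<infinity>p. (c * cnj c) * (b p * cnj (b p) * complex_of_real (a p)))"
    unfolding ip_def by (simp only: complex_cnj_mult ac_simps)
  also have "\<dots> = complex_of_real ((cmod c)\<^sup>2) * ip a b b"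
    unfolding ip_def infsum_cmult_right' complex_norm_square ..
  finally show ?thesis
    by (simp add: ipnorm_def real_sqrt_mult)
qed

lemma weighted_sqnorm_zop_le:
  assumes a: "rapid_decr a" and b: "b \<in> Sdual" and M: "\<And>p. a p \<le> M * a (p + 1)"
  shows "weighted_sqnorm a (zop b) \<le> M * weighted_sqnorm a b"
proof -
  let ?h = "\<lambda>p. (cmod (b p))\<^sup>2 * a p"
  have shift: "bij_betw (\<lambda>q::int. q + 1) UNIV UNIV"
    by (rule bij_betwI[of _ _ _ "\<lambda>q. q - 1"]) auto
  have zop_summable: "(\<lambda>q. (cmod (b (q + 1)))\<^sup>2 * a q) summable_on UNIV"
    using weighted_sqnorm_summable[OF a Sdual_zop[OF b]] by (simp add: zop_def)
  have shifted_summable: "(\<lambda>q. ?h (q + 1)) summable_on UNIV"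
    unfolding summable_on_reindex_bij_betw[OF shift, of ?h] by (rule weighted_sqnorm_summable[OF a b])
  have "weighted_sqnorm a (zop b) = (\<Sum>\<^sub>\<infinity>q. (cmod (b (q + 1)))\<^sup>2 * a q)"
    by (simp add: weighted_sqnorm_def zop_def)
  also have "\<dots> \<le> (\<Sum>\<^sub>\<infinity>q. M * ?h (q + 1))"
  proof (rule infsum_mono[OF zop_summable summable_on_cmult_right[OF shifted_summable]])
    fix q
    have "(cmod (b (q + 1)))\<^sup>2 * a q \<le> (cmod (b (q + 1)))\<^sup>2 * (M * a (q + 1))"
      by (rule mult_left_mono[OF M]) simp
    then show "(cmod (b (q + 1)))\<^sup>2 * a q \<le> M * ?h (q + 1)"
      by (simp only: mult.left_commute)
  qed
  also have "\<dots> = M * (\<Sum>\<^sub>\<infinity>q. ?h (q + 1))"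
    by (rule infsum_cmult_right')
  also have "(\<Sum>\<^sub>\<infinity>q. ?h (q + 1)) = weighted_sqnorm a b"
    unfolding weighted_sqnorm_def by (rule infsum_reindex_bij_betw[OF shift])
  finally show ?thesis .
qed

lemma Tplus_pos: "a \<in> Tplus \<Longrightarrow> a p > 0"
  by (simp add: Tplus_def)

lemma Tplus_rapid_decr: "a \<in> Tplus \<Longrightarrow> rapid_decr a"
  by (simp add: Tplus_def)

lemma ratio_pos: "a \<in> Tplus \<Longrightarrow> a p / a (p + 1) > 0"
  by (simp add: Tplus_pos)

lemma ipnorm_zop_le:
  assumes a: "a \<in> Tplus" and b: "b \<in> Sdual" and M: "\<And>p. a p / a (p + 1) \<le> M"
  shows "ipnorm a (zop b) \<le> sqrt M * ipnorm a b"
proof -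
  have "a p \<le> M * a (p + 1)" for p
    using M[of p] Tplus_pos[OF a, of "p + 1"] by (simp add: divide_le_eq)
  then have "weighted_sqnorm a (zop b) \<le> M * weighted_sqnorm a b"
    by (rule weighted_sqnorm_zop_le[OF Tplus_rapid_decr[OF a] b])
  then show ?thesis
    using Tplus_rapid_decr[OF a] b Sdual_zop[OF b]
    by (simp add: ipnorm_eq_sqrt_weighted_sqnorm real_sqrt_mult[symmetric])
qed

lemma weighted_sqnorm_single:
  "weighted_sqnorm a (\<lambda>q. if q = p then c else 0) = (cmod c)\<^sup>2 * a p"
proof -
  have "weighted_sqnorm a (\<lambda>q. if q = p then c else 0) =
        (\<Sum>\<^sub>\<infinity>q\<in>{p}. (cmod (if q = p then c else 0))\<^sup>2 * a q)"
    unfolding weighted_sqnorm_def by (rule infsum_cong_neutral) auto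
  then show ?thesis by simp
qed

lemma ratio_attained:
  assumes a: "a \<in> Tplus"
  shows "\<exists>b\<in>Sdual. ipnorm a b = 1 \<and> ipnorm a (zop b) = sqrt (a p / a (p + 1))"
proof -
  define c where "c = complex_of_real (1 / sqrt (a (p + 1)))"
  define b where "b = (\<lambda>q. if q = p + 1 then c else 0)"
  have zop_b: "zop b = (\<lambda>q. if q = p then c else 0)"
    by (auto simp: b_def zop_def)
  have c: "(cmod c)\<^sup>2 = 1 / a (p + 1)"
    using Tplus_pos[OF a, of "p + 1"] unfolding c_def norm_of_real by (simp add: power_divide)
  have "ipnorm a b = 1"
    using Tplus_pos[OF a, of "p + 1"] c Tplus_rapid_decr[OF a] unfolding b_def
    by (simp add: ipnorm_eq_sqrt_weighted_sqnorm Sdual_single weighted_sqnorm_single)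
  moreover have "ipnorm a (zop b) = sqrt (a p / a (p + 1))"
    using c Tplus_rapid_decr[OF a] unfolding zop_b
    by (simp add: ipnorm_eq_sqrt_weighted_sqnorm Sdual_single weighted_sqnorm_single)
  ultimately show ?thesis
    using Sdual_single unfolding b_def by blast
qed

lemma zop_zero: "zop (\<lambda>_. 0) = (\<lambda>_. 0)"
  and zop_diff: "zop (\<lambda>p. c p - b p) = (\<lambda>p. zop c p - zop b p)"
  and zop_scale: "zop (\<lambda>p. k * b p) = (\<lambda>p. k * zop b p)"
  by (simp_all add: zop_def)

lemma z_continuous_if_ratio_bounded:
  assumes a: "a \<in> Tplus" and M: "\<And>p. a p / a (p + 1) \<le> M"
  shows "z_continuous a"
  unfolding z_continuous_def
proof (intro ballI allI impI)
  fix b e assume b: "b \<in> Sdual" and e: "(e::real) > 0"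
  have M0: "M \<ge> 0"
    using M[of 0] ratio_pos[OF a, of 0] by linarith
  show "\<exists>d>0. \<forall>c\<in>Sdual. ipnorm a (\<lambda>p. c p - b p) < d \<longrightarrow> ipnorm a (\<lambda>p. zop c p - zop b p) < e"
  proof (intro exI[of _ "e / (sqrt M + 1)"] conjI ballI impI)
    show "e / (sqrt M + 1) > 0"
      using e M0 by (simp add: add_nonneg_pos)
    fix c assume c: "c \<in> Sdual" and close: "ipnorm a (\<lambda>p. c p - b p) < e / (sqrt M + 1)"
    have "ipnorm a (\<lambda>p. zop c p - zop b p) \<le> sqrt M * ipnorm a (\<lambda>p. c p - b p)"
      unfolding zop_diff[symmetric] by (rule ipnorm_zop_le[OF a Sdual_diff[OF b c] M])
    also have "\<dots> \<le> sqrt M * (e / (sqrt M + 1))"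
      using close M0 by (intro mult_left_mono) auto
    also have "\<dots> = e * (sqrt M / (sqrt M + 1))"
      by simp
    also have "\<dots> < e * 1"
      using M0 by (intro mult_strict_left_mono[OF _ e]) (simp add: divide_less_eq add_nonneg_pos)
    finally show "ipnorm a (\<lambda>p. zop c p - zop b p) < e" by simp
  qed
qed

lemma zop_bounded_if_z_continuous:
  assumes "z_continuous a"
  obtains K where "\<And>b. b \<in> Sdual \<Longrightarrow> ipnorm a b \<le> 1 \<Longrightarrow> ipnorm a (zop b) \<le> K"
proof -
  obtain d where d: "d > 0" and cont_at_0: "\<And>c. c \<in> Sdual \<Longrightarrow> ipnorm a (\<lambda>p. c p - 0) < d \<Longrightarrow>
      ipnorm a (\<lambda>p. zop c p - zop (\<lambda>_. 0) p) < 1"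
    using assms[unfolded z_continuous_def, rule_format, OF Sdual_zero, of 1] by auto
  have "ipnorm a (zop b) \<le> 2 / d" if b: "b \<in> Sdual" and b1: "ipnorm a b \<le> 1" for b
  proof -
    let ?k = "complex_of_real (d / 2)"
    have "ipnorm a (\<lambda>p. ?k * b p) = d / 2 * ipnorm a b"
      unfolding ipnorm_scale norm_of_real using d by simp
    also have "\<dots> < d"
      using mult_left_le[OF b1, of "d / 2"] d by linarith
    finally have "ipnorm a (\<lambda>p. ?k * b p - 0) < d"
      by (simp only: diff_zero)
    then have "ipnorm a (zop (\<lambda>p. ?k * b p)) < 1"
      using cont_at_0[OF Sdual_scale[OF b]] unfolding zop_zero diff_zero by blast
    then have "d / 2 * ipnorm a (zop b) < 1"
      unfolding zop_scale ipnorm_scale norm_of_real using d by simp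
    then show ?thesis
      using d by (simp add: field_simps)
  qed
  then show ?thesis
    by (rule that)
qed

lemma ratio_le_if_zop_bounded:
  assumes a: "a \<in> Tplus" and K: "\<And>b. b \<in> Sdual \<Longrightarrow> ipnorm a b \<le> 1 \<Longrightarrow> ipnorm a (zop b) \<le> K"
  shows "a p / a (p + 1) \<le> K\<^sup>2"
proof -
  obtain b where "b \<in> Sdual" "ipnorm a b = 1" "ipnorm a (zop b) = sqrt (a p / a (p + 1))"
    using ratio_attained[OF a] by blast
  then have "sqrt (a p / a (p + 1)) \<le> K"
    using K by fastforce
  then show ?thesis
    by (rule sqrt_le_D)
qed

lemma z_opnorm_eq_sqrt_Sup_ratio:
  assumes a: "a \<in> Tplus" and bdd: "bdd_above (range (\<lambda>p. a p / a (p + 1)))"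
  shows "z_opnorm a = sqrt (SUP p. a p / a (p + 1))"
proof -
  define M where "M = (SUP p. a p / a (p + 1))"
  define S where "S = {ipnorm a (zop b) | b. b \<in> Sdual \<and> ipnorm a b \<le> 1}"
  have ratio_le: "a p / a (p + 1) \<le> M" for p
    unfolding M_def by (rule cSUP_upper[OF UNIV_I bdd])
  have M0: "M \<ge> 0"
    using ratio_le[of 0] ratio_pos[OF a, of 0] by linarith
  have S_le: "x \<le> sqrt M" if "x \<in> S" for x
  proof -
    obtain b where b: "b \<in> Sdual" "ipnorm a b \<le> 1" and x: "x = ipnorm a (zop b)"
      using \<open>x \<in> S\<close> by (auto simp: S_def)
    have "x \<le> sqrt M * ipnorm a b"
      unfolding x by (rule ipnorm_zop_le[OF a b(1) ratio_le])
    also have "\<dots> \<le> sqrt M"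
      using b(2) M0 by (simp add: mult_left_le)
    finally show ?thesis .
  qed
  have sqrt_ratio_in_S: "sqrt (a p / a (p + 1)) \<in> S" for p
    using ratio_attained[OF a, of p] unfolding S_def by force
  have sqrt_ratio_le: "sqrt (a p / a (p + 1)) \<le> Sup S" for p
    using sqrt_ratio_in_S S_le by (intro cSup_upper bdd_aboveI[of S "sqrt M"])
  have "Sup S \<le> sqrt M"
    using sqrt_ratio_in_S S_le by (intro cSup_least) auto
  moreover have "sqrt M \<le> Sup S"
  proof (rule real_le_lsqrt)
    show "0 \<le> Sup S"
      using sqrt_ratio_le[of 0] ratio_pos[OF a, of 0] by (meson less_imp_le order_trans real_sqrt_ge_zero)
    show "M \<le> (Sup S)\<^sup>2"
      unfolding M_def using sqrt_ratio_le by (intro cSUP_least sqrt_le_D) auto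
  qed
  ultimately show ?thesis
    by (simp add: z_opnorm_def S_def M_def)
qed

lemma bounded_range_iff_bdd_above:
  fixes f :: "'a \<Rightarrow> real"
  assumes "\<And>x. f x \<ge> 0"
  shows "bounded (range f) \<longleftrightarrow> bdd_above (range f)"
  using assms by (auto simp: bounded_real bdd_above_def)

theorem mainTheorem17:
  fixes a :: "int \<Rightarrow> real"
  assumes "a \<in> Tplus"
  shows "(z_continuous a \<longleftrightarrow> bounded (range (\<lambda>p. a p / a (p + 1)))) \<and>
         (bounded (range (\<lambda>p. a p / a (p + 1))) \<longrightarrow>
           (z_opnorm a)\<^sup>2 = (SUP p. a p / a (p + 1)))"
proof -
  let ?r = "\<lambda>p. a p / a (p + 1)"
  have bounded_iff: "bounded (range ?r) \<longleftrightarrow> bdd_above (range ?r)"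
    using ratio_pos[OF assms] by (intro bounded_range_iff_bdd_above less_imp_le)
  have "z_continuous a \<longleftrightarrow> bdd_above (range ?r)"
  proof
    assume "z_continuous a"
    then obtain K where "\<And>b. b \<in> Sdual \<Longrightarrow> ipnorm a b \<le> 1 \<Longrightarrow> ipnorm a (zop b) \<le> K"
      using zop_bounded_if_z_continuous by blast
    then have "?r p \<le> K\<^sup>2" for p
      by (rule ratio_le_if_zop_bounded[OF assms])
    then show "bdd_above (range ?r)"
      by (intro bdd_aboveI2)
  next
    assume "bdd_above (range ?r)"
    then have "?r p \<le> (SUP p. ?r p)" for p
      by (rule cSUP_upper[OF UNIV_I])
    then show "z_continuous a"
      by (rule z_continuous_if_ratio_bounded[OF assms])
  qed
  moreover have "(z_opnorm a)\<^sup>2 = (SUP p. ?r p)" if "bdd_above (range ?r)"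
  proof -
    have "0 \<le> (SUP p. ?r p)"
      using cSUP_upper[OF UNIV_I that, of 0] ratio_pos[OF assms, of 0] by linarith
    then show ?thesis
      by (simp add: z_opnorm_eq_sqrt_Sup_ratio[OF assms that])
  qed
  ultimately show ?thesis
    unfolding bounded_iff by blast
qed

end
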